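(* Let $k,m,n$ be positive integers. For all $X\in M_{m\times n}(R_k)$ and $Y\in M_{n\times m}(R_k)$ we have $\mathfrak{T}_k(XY)=\mathfrak{T}_k(YX)$ in $\mathbb{Z}/k\mathbb{Z}$.
   Context: $\mathbb{N}=\{1,2,3,\dots\}$. $R$ denotes the ring of all $\mathbb{N}\times\mathbb{N}$ integer matrices with only finitely many nonzero entries in each row and each column, with entrywise addition and multiplication $(AB)_{i,j}=\sum_{l\ge1}a_{i,l}b_{l,j}$. Fix a positive integer $k$. Partition $\mathbb{N}$ into consecutive blocks $J_1=\{1\}$ and, for $m\ge2$, $J_m=\{2+k(m-2),\dots,1+k(m-1)\}$. For $A\in R$, the block $A^{m,n}$ is the submatrix with rows indexed by $J_m$ and columns by $J_n$. $R_k$ is the subring of $A\in R$ such that for all but finitely many pairs $(m,n)$ with $m,n\ge2$, $A^{m,n}=cI_k$ for some integer $c$. For a finite square integer matrix $M$, $\operatorname{t}_k(M)\in\mathbb{Z}/k\mathbb{Z}$ is the residue class of the sum of its diagonal entries. For $A\in R_k$, $\operatorname{T}_k(A)=\sum_{n\ge1}\operatorname{t}_k(A^{n,n})\in\mathbb{Z}/k\mathbb{Z}$ (a finite sum). For a square matrix $W\in M_{d\times d}(R_k)$, $\mathfrak{T}_k(W)=\sum_{l=1}^d\operatorname{T}_k(W_{l,l})$. *)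

theory Defs
  imports Main
begin

text \<open>Infinite integer matrices indexed by positive naturals (index 0 is unused and
  required to carry zero entries).\<close>
type_synonym imat = "nat \<Rightarrow> nat \<Rightarrow> int"

definition inR :: "imat \<Rightarrow> bool" where
  "inR A \<longleftrightarrow> (\<forall>i j. (i = 0 \<or> j = 0) \<longrightarrow> A i j = 0)
      \<and> (\<forall>i. finite {j. A i j \<noteq> 0}) \<and> (\<forall>j. finite {i. A i j \<noteq> 0})"

definition rmult :: "imat \<Rightarrow> imat \<Rightarrow> imat" where
  "rmult A B = (\<lambda>i j. \<Sum>l\<in>{l. 1 \<le> l \<and> A i l \<noteq> 0}. A i l * B l j)"

definition Jblk :: "nat \<Rightarrow> nat \<Rightarrow> nat set" where
  "Jblk k p = (if p = 1 then {1} else {2 + k * (p - 2) .. 1 + k * (p - 1)})"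

definition blkent :: "nat \<Rightarrow> imat \<Rightarrow> nat \<Rightarrow> nat \<Rightarrow> nat \<Rightarrow> nat \<Rightarrow> int" where
  "blkent k A p q r s = A (2 + k * (p - 2) + r) (2 + k * (q - 2) + s)"

definition scalar_blk :: "nat \<Rightarrow> imat \<Rightarrow> nat \<Rightarrow> nat \<Rightarrow> bool" where
  "scalar_blk k A p q \<longleftrightarrow> (\<exists>c::int. \<forall>r<k. \<forall>s<k. blkent k A p q r s = (if r = s then c else 0))"

definition inRk :: "nat \<Rightarrow> imat \<Rightarrow> bool" where
  "inRk k A \<longleftrightarrow> inR A \<and> finite {(p, q). p \<ge> 2 \<and> q \<ge> 2 \<and> \<not> scalar_blk k A p q}"

definition blktr :: "nat \<Rightarrow> imat \<Rightarrow> nat \<Rightarrow> int" where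
  "blktr k A p = (\<Sum>i\<in>Jblk k p. A i i)"

text \<open>T_k(A) in Z/kZ, represented by its canonical residue in {0..k-1}: the sum of
  t_k(A^{p,p}) over p \<ge> 1 (only the finitely many nonzero residues contribute).\<close>
definition Tk :: "nat \<Rightarrow> imat \<Rightarrow> int" where
  "Tk k A = (\<Sum>p\<in>{p. 1 \<le> p \<and> blktr k A p mod int k \<noteq> 0}. blktr k A p) mod int k"

text \<open>Finite matrices over R: entries indexed by 1..rows, 1..cols.\<close>
type_synonym rmat = "nat \<Rightarrow> nat \<Rightarrow> imat"

definition mmult :: "nat \<Rightarrow> rmat \<Rightarrow> rmat \<Rightarrow> rmat" where
  "mmult n X Y = (\<lambda>a b. (\<lambda>i j. \<Sum>c = 1..n. rmult (X a c) (Y c b) i j))"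

definition frakT :: "nat \<Rightarrow> nat \<Rightarrow> rmat \<Rightarrow> int" where
  "frakT k d W = (\<Sum>l = 1..d. Tk k (W l l)) mod int k"

end

theory Submission
  imports Defs "HOL-Number_Theory.Cong"
begin

text \<open>Fix \<open>N\<close> so large that, for all entries of \<open>X\<close> and \<open>Y\<close>, every block outside
  \<open>[1..N]\<^sup>2\<close> is scalar and the first row and column vanish beyond \<open>J\<^sub>N\<close>. A scalar block \<open>c I\<^sub>k\<close>
  has trace \<open>k c\<close>, and so has the product of two of them; hence a diagonal block of a product
  beyond \<open>N\<close> has trace \<open>0\<close> mod \<open>k\<close>, and \<open>T\<^sub>k\<close> of each entry of \<open>XY\<close> or \<open>YX\<close> is the ordinary trace of
  its upper-left corner \<open>J\<^sub>1 \<union> \<dots> \<union> J\<^sub>N\<close>. On that corner, \<open>tr (AB)\<close> and \<open>tr (BA)\<close> differ only by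
  terms pairing the corner with blocks beyond \<open>N\<close>, i.e. again by traces of products of scalar
  blocks, which vanish mod \<open>k\<close>; summing over the entries gives the theorem.\<close>

text \<open>For \<open>p \<ge> 2\<close>, \<open>blk_idx k p r\<close> is the \<open>r\<close>-th element (counting from 0) of the block \<open>J\<^sub>p\<close>,
  and \<open>blk_end k N\<close> is the largest element of \<open>J\<^sub>N\<close>, so that \<open>{1..blk_end k N} = J\<^sub>1 \<union> \<dots> \<union> J\<^sub>N\<close>.\<close>

abbreviation blk_idx :: "nat \<Rightarrow> nat \<Rightarrow> nat \<Rightarrow> nat" where
  "blk_idx k p r \<equiv> 2 + k * (p - 2) + r"

definition blk_end :: "nat \<Rightarrow> nat \<Rightarrow> nat" where
  "blk_end k N = 1 + k * (N - 1)"

lemma blk_end_1 [simp]: "blk_end k 1 = 1"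
  by (simp add: blk_end_def)

lemma blk_end_mono: "N \<le> N' \<Longrightarrow> blk_end k N \<le> blk_end k N'"
  unfolding blk_end_def by (simp add: diff_le_mono)

lemma le_blk_end: "0 < k \<Longrightarrow> 1 \<le> N \<Longrightarrow> N \<le> blk_end k N"
  unfolding blk_end_def by (cases N) auto

lemma Jblk_Suc: "1 \<le> N \<Longrightarrow> Jblk k (Suc N) = {blk_end k N<..blk_end k (Suc N)}"
  unfolding Jblk_def blk_end_def by (cases N) (auto simp: algebra_simps)

lemma Jblk_eq_image: "2 \<le> p \<Longrightarrow> Jblk k p = blk_idx k p ` {..<k}"
proof -
  assume "2 \<le> p"
  then have "Jblk k p = {blk_idx k p 0..<blk_idx k p 0 + k}"
    unfolding Jblk_def by (cases p) (auto simp: algebra_simps)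
  also have "\<dots> = blk_idx k p ` {..<k}"
  proof (intro equalityI subsetI)
    fix i assume "i \<in> {blk_idx k p 0..<blk_idx k p 0 + k}"
    then show "i \<in> blk_idx k p ` {..<k}"
      by (intro image_eqI[of _ _ "i - blk_idx k p 0"]) auto
  qed auto
  finally show ?thesis .
qed

lemma sum_Jblk: "2 \<le> p \<Longrightarrow> (\<Sum>i\<in>Jblk k p. f i) = (\<Sum>r<k. f (blk_idx k p r))"
  by (simp add: Jblk_eq_image sum.reindex inj_on_def)

lemma sum_greaterThanAtMost_blk_end:
  assumes "1 \<le> N" "N \<le> N'"
  shows "(\<Sum>i\<in>{blk_end k N<..blk_end k N'}. f i) = (\<Sum>p\<in>{N<..N'}. \<Sum>i\<in>Jblk k p. f i)"
  using assms(2)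
proof (induction N' rule: dec_induct)
  case base
  then show ?case by simp
next
  case (step N')
  have "{blk_end k N<..blk_end k (Suc N')} = {blk_end k N<..blk_end k N'} \<union> Jblk k (Suc N')"
    using assms(1) step.hyps blk_end_mono[of N N' k] blk_end_mono[of N' "Suc N'" k]
    by (auto simp: Jblk_Suc)
  moreover have "{N<..Suc N'} = insert (Suc N') {N<..N'}"
    using step.hyps by auto
  ultimately show ?case
    using assms(1) step.hyps step.IH by (simp add: sum.union_disjoint Jblk_Suc add.commute)
qed

lemma sum_blktr:
  assumes "1 \<le> N"
  shows "(\<Sum>p\<in>{1..N}. blktr k A p) = (\<Sum>i\<in>{1..blk_end k N}. A i i)"
proof -
  have "{1..N} = insert 1 {1<..N}" "{1..blk_end k N} = insert 1 {1<..blk_end k N}"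
    using assms by (auto simp: blk_end_def)
  then show ?thesis
    using sum_greaterThanAtMost_blk_end[OF order_refl assms, where f = "\<lambda>i. A i i" and k = k, unfolded blk_end_1]
    by (simp add: blktr_def Jblk_def)
qed

lemma Tk_eq_sum_blktr:
  assumes "\<forall>p>N. int k dvd blktr k A p"
  shows "Tk k A = (\<Sum>p\<in>{1..N}. blktr k A p) mod int k"
proof -
  let ?P = "{p. 1 \<le> p \<and> blktr k A p mod int k \<noteq> 0}"
  have "?P \<subseteq> {1..N}"
    using assms by (auto simp: dvd_eq_mod_eq_0 not_less[symmetric])
  have "Tk k A = (\<Sum>p\<in>?P. blktr k A p mod int k) mod int k"
    unfolding Tk_def by (rule mod_sum_eq[symmetric])
  also have "\<dots> = (\<Sum>p\<in>{1..N}. blktr k A p mod int k) mod int k"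
    using \<open>?P \<subseteq> {1..N}\<close>
    by (intro arg_cong[where f = "\<lambda>x. x mod int k"] sum.mono_neutral_left) auto
  also have "\<dots> = (\<Sum>p\<in>{1..N}. blktr k A p) mod int k"
    by (rule mod_sum_eq)
  finally show ?thesis .
qed

lemma scalar_blk_prod_trace_dvd:
  assumes "scalar_blk k X p q" "scalar_blk k Y q p"
  shows "int k dvd (\<Sum>r<k. \<Sum>s<k. X (blk_idx k p r) (blk_idx k q s) * Y (blk_idx k q s) (blk_idx k p r))"
proof -
  obtain c d where
    c: "\<forall>r<k. \<forall>s<k. X (blk_idx k p r) (blk_idx k q s) = (if r = s then c else 0)" and
    d: "\<forall>r<k. \<forall>s<k. Y (blk_idx k q s) (blk_idx k p r) = (if r = s then d else 0)"
    using assms unfolding scalar_blk_def blkent_def by metis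
  have "(\<Sum>r<k. \<Sum>s<k. X (blk_idx k p r) (blk_idx k q s) * Y (blk_idx k q s) (blk_idx k p r))
      = (\<Sum>r<k. \<Sum>s<k. if s = r then c * d else 0)"
    using c d by (intro sum.cong) auto
  also have "\<dots> = int k * (c * d)"
    by simp
  finally show ?thesis by simp
qed

lemma scalar_blocks_cross_sum_dvd:
  assumes "1 \<le> N" "N \<le> N'" "1 \<le> M" "M \<le> M'"
    and "\<And>p q. p \<in> {N<..N'} \<Longrightarrow> q \<in> {M<..M'} \<Longrightarrow> scalar_blk k X p q \<and> scalar_blk k Y q p"
  shows "int k dvd (\<Sum>i\<in>{blk_end k N<..blk_end k N'}. \<Sum>l\<in>{blk_end k M<..blk_end k M'}. X i l * Y l i)"
proof -
  have "(\<Sum>i\<in>{blk_end k N<..blk_end k N'}. \<Sum>l\<in>{blk_end k M<..blk_end k M'}. X i l * Y l i)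
      = (\<Sum>p\<in>{N<..N'}. \<Sum>r<k. \<Sum>q\<in>{M<..M'}. \<Sum>s<k.
           X (blk_idx k p r) (blk_idx k q s) * Y (blk_idx k q s) (blk_idx k p r))"
    using assms(1,3) by (simp add: sum_greaterThanAtMost_blk_end[OF assms(1,2)] sum_greaterThanAtMost_blk_end[OF assms(3,4)] sum_Jblk)
  also have "\<dots> = (\<Sum>p\<in>{N<..N'}. \<Sum>q\<in>{M<..M'}. \<Sum>r<k. \<Sum>s<k.
           X (blk_idx k p r) (blk_idx k q s) * Y (blk_idx k q s) (blk_idx k p r))"
    by (rule sum.cong[OF refl], rule sum.swap)
  also have "int k dvd \<dots>"
    using assms(5) by (intro dvd_sum scalar_blk_prod_trace_dvd) auto
  finally show ?thesis .
qed

lemma rmult_eq_sum: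
  assumes "inR X" "finite L" "\<And>l. X i l \<noteq> 0 \<Longrightarrow> l \<in> L"
  shows "rmult X Y i j = (\<Sum>l\<in>L. X i l * Y l j)"
  unfolding rmult_def using assms
  by (intro sum.mono_neutral_cong_left) (auto simp: inR_def Suc_le_eq intro: gr0I)

lemma inR_rows_bounded:
  assumes "inR X" "finite I"
  shows "\<exists>K. \<forall>i\<in>I. \<forall>l. X i l \<noteq> 0 \<longrightarrow> l \<le> K"
proof -
  have "finite (\<Union>i\<in>I. {l. X i l \<noteq> 0})"
    using assms unfolding inR_def by auto
  then show ?thesis
    by (auto simp: finite_nat_set_iff_bounded_le)
qed

lemma rmult_diag_split:
  assumes "inR X" "\<forall>l. X i l \<noteq> 0 \<longrightarrow> l \<le> blk_end k Q" "M \<le> Q"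
  shows "rmult X Y i i = (\<Sum>l\<in>{1..blk_end k M}. X i l * Y l i) + (\<Sum>l\<in>{blk_end k M<..blk_end k Q}. X i l * Y l i)"
proof -
  have split: "{1..blk_end k Q} = {1..blk_end k M} \<union> {blk_end k M<..blk_end k Q}"
    using blk_end_mono[OF assms(3), of k] by auto
  have "(\<Sum>l\<in>{1..blk_end k Q}. X i l * Y l i)
      = (\<Sum>l\<in>{1..blk_end k M}. X i l * Y l i) + (\<Sum>l\<in>{blk_end k M<..blk_end k Q}. X i l * Y l i)"
    unfolding split by (rule sum.union_disjoint) auto
  moreover have "rmult X Y i i = (\<Sum>l\<in>{1..blk_end k Q}. X i l * Y l i)"
    using assms(1,2) by (intro rmult_eq_sum) (auto simp: inR_def Suc_le_eq intro: gr0I)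
  ultimately show ?thesis
    by simp
qed

lemma sum_diag_rmult_split:
  assumes "inR X" "\<forall>i\<in>I. \<forall>l. X i l \<noteq> 0 \<longrightarrow> l \<le> blk_end k Q" "M \<le> Q"
  shows "(\<Sum>i\<in>I. rmult X Y i i) = (\<Sum>i\<in>I. \<Sum>l\<in>{1..blk_end k M}. X i l * Y l i)
           + (\<Sum>i\<in>I. \<Sum>l\<in>{blk_end k M<..blk_end k Q}. X i l * Y l i)"
  unfolding sum.distrib[symmetric] using assms by (intro sum.cong refl rmult_diag_split) auto

definition scalar_beyond :: "nat \<Rightarrow> imat \<Rightarrow> nat \<Rightarrow> bool" where
  "scalar_beyond k A N \<longleftrightarrow>
     (\<forall>p q. 2 \<le> p \<longrightarrow> 2 \<le> q \<longrightarrow> (N < p \<or> N < q) \<longrightarrow> scalar_blk k A p q)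
     \<and> (\<forall>l>blk_end k N. A 1 l = 0 \<and> A l 1 = 0)"

lemma scalar_beyond_mono: "scalar_beyond k A N \<Longrightarrow> N \<le> N' \<Longrightarrow> scalar_beyond k A N'"
  unfolding scalar_beyond_def
  by (meson blk_end_mono le_less_trans)

lemma eventually_scalar_beyond:
  assumes "0 < k" "inRk k A"
  shows "eventually (scalar_beyond k A) sequentially"
proof -
  let ?S = "{(p, q). p \<ge> 2 \<and> q \<ge> 2 \<and> \<not> scalar_blk k A p q}"
  have "finite (fst ` ?S \<union> snd ` ?S)"
    using assms(2) unfolding inRk_def by auto
  then obtain K1 where "\<forall>x\<in>fst ` ?S \<union> snd ` ?S. x \<le> K1"
    unfolding finite_nat_set_iff_bounded_le by blast
  then have K1: "p \<le> K1 \<and> q \<le> K1" if "(p, q) \<in> ?S" for p q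
    using imageI[OF that, of fst] imageI[OF that, of snd] by auto
  have "finite ({l. A 1 l \<noteq> 0} \<union> {l. A l 1 \<noteq> 0})"
    using assms(2) unfolding inRk_def inR_def by auto
  then obtain K2 where K2: "\<And>l. A 1 l \<noteq> 0 \<or> A l 1 \<noteq> 0 \<Longrightarrow> l \<le> K2"
    unfolding finite_nat_set_iff_bounded_le by blast
  let ?N = "max 1 (max K1 K2)"
  have "scalar_blk k A p q" if "2 \<le> p" "2 \<le> q" "?N < p \<or> ?N < q" for p q
    using K1[of p q] that by fastforce
  moreover have "A 1 l = 0 \<and> A l 1 = 0" if "blk_end k ?N < l" for l
    using K2[of l] le_blk_end[OF assms(1), of ?N] that by fastforce
  ultimately have "scalar_beyond k A ?N"
    unfolding scalar_beyond_def by blast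
  then show ?thesis
    unfolding eventually_sequentially by (blast intro: scalar_beyond_mono)
qed

lemma blktr_rmult_dvd:
  assumes "0 < k" "1 \<le> N" "inR X" "scalar_beyond k X N" "scalar_beyond k Y N" "N < p"
  shows "int k dvd blktr k (rmult X Y) p"
proof -
  have "finite (Jblk k p)"
    by (simp add: Jblk_def)
  then obtain K where K: "\<forall>i\<in>Jblk k p. \<forall>l. X i l \<noteq> 0 \<longrightarrow> l \<le> K"
    using inR_rows_bounded[OF assms(3)] by blast
  define Q where "Q = max p K"
  have Q: "1 \<le> Q" "p \<le> Q" "K \<le> blk_end k Q"
    using assms(2,6) le_blk_end[OF assms(1), of Q] by (auto simp: Q_def)
  have p: "Jblk k p = {blk_end k (p - 1)<..blk_end k p}" "1 \<le> p - 1"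
    using Jblk_Suc[of "p - 1" k] assms(2,6) by auto
  have "blktr k (rmult X Y) p = (\<Sum>i\<in>Jblk k p. \<Sum>l\<in>{1..blk_end k 1}. X i l * Y l i)
      + (\<Sum>i\<in>Jblk k p. \<Sum>l\<in>{blk_end k 1<..blk_end k Q}. X i l * Y l i)"
    unfolding blktr_def using K Q(3) by (intro sum_diag_rmult_split[OF assms(3) _ Q(1)]) fastforce
  moreover have "X i 1 = 0" if "i \<in> Jblk k p" for i
  proof -
    have "blk_end k N \<le> blk_end k (p - 1)"
      using assms(6) by (intro blk_end_mono) simp
    then show ?thesis
      using that p(1) assms(4) unfolding scalar_beyond_def by auto
  qed
  ultimately have "blktr k (rmult X Y) p = (\<Sum>i\<in>Jblk k p. \<Sum>l\<in>{blk_end k 1<..blk_end k Q}. X i l * Y l i)"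
    by (simp add: blk_end_def)
  also have "int k dvd \<dots>"
    unfolding p(1)
  proof (rule scalar_blocks_cross_sum_dvd)
    fix p' q assume "p' \<in> {p - 1<..p}" "q \<in> {1<..Q}"
    then have "p' = p" "2 \<le> q"
      by auto
    then show "scalar_blk k X p' q \<and> scalar_blk k Y q p'"
      using assms(2,4,5,6) unfolding scalar_beyond_def by auto
  qed (use p Q in auto)
  finally show ?thesis .
qed

lemma corner_cross_sum_dvd:
  assumes "1 \<le> N" "N \<le> Q" "scalar_beyond k X N" "scalar_beyond k Y N"
  shows "int k dvd (\<Sum>i\<in>{1..blk_end k N}. \<Sum>l\<in>{blk_end k N<..blk_end k Q}. X i l * Y l i)"
proof -
  have "{1..blk_end k N} = insert 1 {blk_end k 1<..blk_end k N}"
    using assms(1) by (auto simp: blk_end_def)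
  moreover have "\<forall>l\<in>{blk_end k N<..blk_end k Q}. X 1 l = 0"
    using assms(3) unfolding scalar_beyond_def by auto
  moreover have "int k dvd (\<Sum>i\<in>{blk_end k 1<..blk_end k N}. \<Sum>l\<in>{blk_end k N<..blk_end k Q}. X i l * Y l i)"
  proof (rule scalar_blocks_cross_sum_dvd)
    fix p q assume "p \<in> {1<..N}" "q \<in> {N<..Q}"
    then show "scalar_blk k X p q \<and> scalar_blk k Y q p"
      using assms(3,4) unfolding scalar_beyond_def by auto
  qed (use assms in auto)
  ultimately show ?thesis
    by (simp add: blk_end_def)
qed

lemma corner_trace_rmult_commute:
  assumes "0 < k" "1 \<le> N" "inR X" "inR Y" "scalar_beyond k X N" "scalar_beyond k Y N"
  shows "[\<Sum>i\<in>{1..blk_end k N}. rmult X Y i i = \<Sum>i\<in>{1..blk_end k N}. rmult Y X i i] (mod int k)"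
proof -
  let ?I = "{1..blk_end k N}"
  obtain K1 K2 where
    K1: "\<forall>i\<in>?I. \<forall>l. X i l \<noteq> 0 \<longrightarrow> l \<le> K1" and K2: "\<forall>i\<in>?I. \<forall>l. Y i l \<noteq> 0 \<longrightarrow> l \<le> K2"
    using inR_rows_bounded[OF assms(3) finite_atLeastAtMost] inR_rows_bounded[OF assms(4) finite_atLeastAtMost]
    by blast
  define Q where "Q = max N (max K1 K2)"
  have Q: "N \<le> Q" "K1 \<le> blk_end k Q" "K2 \<le> blk_end k Q"
    using assms(2) le_blk_end[OF assms(1), of Q] by (auto simp: Q_def)
  let ?C = "{blk_end k N<..blk_end k Q}"
  have "(\<Sum>i\<in>?I. rmult X Y i i) = (\<Sum>i\<in>?I. \<Sum>l\<in>?I. X i l * Y l i) + (\<Sum>i\<in>?I. \<Sum>l\<in>?C. X i l * Y l i)"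
    using K1 Q(2) by (intro sum_diag_rmult_split[OF assms(3) _ Q(1)]) fastforce
  moreover have "(\<Sum>i\<in>?I. rmult Y X i i) = (\<Sum>i\<in>?I. \<Sum>l\<in>?I. Y i l * X l i) + (\<Sum>i\<in>?I. \<Sum>l\<in>?C. Y i l * X l i)"
    using K2 Q(3) by (intro sum_diag_rmult_split[OF assms(4) _ Q(1)]) fastforce
  moreover have "(\<Sum>i\<in>?I. \<Sum>l\<in>?I. X i l * Y l i) = (\<Sum>i\<in>?I. \<Sum>l\<in>?I. Y i l * X l i)"
    by (subst sum.swap) (simp add: mult.commute)
  moreover obtain s t where
    "(\<Sum>i\<in>?I. \<Sum>l\<in>?C. X i l * Y l i) = int k * s" "(\<Sum>i\<in>?I. \<Sum>l\<in>?C. Y i l * X l i) = int k * t"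
    using corner_cross_sum_dvd[OF assms(2) Q(1)] assms(5,6) by (meson dvdE)
  ultimately show ?thesis
    unfolding cong_def by simp
qed

lemma Tk_sum_rmult:
  assumes "0 < k" "1 \<le> N" "finite C"
    and "\<And>c. c \<in> C \<Longrightarrow> inR (X c) \<and> scalar_beyond k (X c) N \<and> scalar_beyond k (Y c) N"
  shows "Tk k (\<lambda>i j. \<Sum>c\<in>C. rmult (X c) (Y c) i j)
       = (\<Sum>c\<in>C. \<Sum>i\<in>{1..blk_end k N}. rmult (X c) (Y c) i i) mod int k"
proof -
  have blktr_sum: "blktr k (\<lambda>i j. \<Sum>c\<in>C. rmult (X c) (Y c) i j) p = (\<Sum>c\<in>C. blktr k (rmult (X c) (Y c)) p)" for p
    unfolding blktr_def by (rule sum.swap)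
  have "\<forall>p>N. int k dvd blktr k (\<lambda>i j. \<Sum>c\<in>C. rmult (X c) (Y c) i j) p"
  proof (intro allI impI)
    fix p assume "N < p"
    then show "int k dvd blktr k (\<lambda>i j. \<Sum>c\<in>C. rmult (X c) (Y c) i j) p"
      unfolding blktr_sum using assms by (intro dvd_sum blktr_rmult_dvd) auto
  qed
  then have "Tk k (\<lambda>i j. \<Sum>c\<in>C. rmult (X c) (Y c) i j)
      = (\<Sum>p\<in>{1..N}. blktr k (\<lambda>i j. \<Sum>c\<in>C. rmult (X c) (Y c) i j) p) mod int k"
    by (rule Tk_eq_sum_blktr)
  also have "\<dots> = (\<Sum>i\<in>{1..blk_end k N}. \<Sum>c\<in>C. rmult (X c) (Y c) i i) mod int k"
    by (simp only: sum_blktr[OF assms(2)])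
  also have "\<dots> = (\<Sum>c\<in>C. \<Sum>i\<in>{1..blk_end k N}. rmult (X c) (Y c) i i) mod int k"
    by (subst sum.swap) (rule refl)
  finally show ?thesis .
qed

lemma frakT_mmult_eq:
  assumes "0 < k" "1 \<le> N"
    and "\<And>a c. a \<in> {1..m} \<Longrightarrow> c \<in> {1..n} \<Longrightarrow>
           inR (X a c) \<and> scalar_beyond k (X a c) N \<and> scalar_beyond k (Y c a) N"
  shows "frakT k m (mmult n X Y)
       = (\<Sum>a=1..m. \<Sum>c=1..n. \<Sum>i\<in>{1..blk_end k N}. rmult (X a c) (Y c a) i i) mod int k"
proof -
  have "Tk k (mmult n X Y a a) = (\<Sum>c=1..n. \<Sum>i\<in>{1..blk_end k N}. rmult (X a c) (Y c a) i i) mod int k"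
    if "a \<in> {1..m}" for a
    unfolding mmult_def by (rule Tk_sum_rmult[OF assms(1,2)]) (use assms(3) that in auto)
  then show ?thesis
    unfolding frakT_def by (simp add: mod_sum_eq)
qed

theorem mainTheorem7:
  fixes k m n :: nat and X Y :: rmat
  assumes "k > 0" "m > 0" "n > 0"
    and "\<forall>a\<in>{1..m}. \<forall>c\<in>{1..n}. inRk k (X a c)"
    and "\<forall>c\<in>{1..n}. \<forall>a\<in>{1..m}. inRk k (Y c a)"
  shows "frakT k m (mmult n X Y) = frakT k n (mmult m Y X)"
proof -
  have "\<forall>\<^sub>F N in sequentially. 1 \<le> N \<and>
      (\<forall>a\<in>{1..m}. \<forall>c\<in>{1..n}. scalar_beyond k (X a c) N \<and> scalar_beyond k (Y c a) N)"
    using assms eventually_scalar_beyond[OF assms(1)]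
    by (auto intro!: eventually_conj eventually_ball_finite)
  then obtain N where N: "1 \<le> N"
    and S: "\<And>a c. a \<in> {1..m} \<Longrightarrow> c \<in> {1..n} \<Longrightarrow> scalar_beyond k (X a c) N \<and> scalar_beyond k (Y c a) N"
    unfolding eventually_sequentially by blast
  have R: "inR (X a c)" "inR (Y c a)" if "a \<in> {1..m}" "c \<in> {1..n}" for a c
    using assms(4,5) that unfolding inRk_def by blast+
  have "frakT k n (mmult m Y X)
      = (\<Sum>c=1..n. \<Sum>a=1..m. \<Sum>i\<in>{1..blk_end k N}. rmult (Y c a) (X a c) i i) mod int k"
    using R S by (intro frakT_mmult_eq[OF assms(1) N]) auto
  also have "\<dots> = (\<Sum>a=1..m. \<Sum>c=1..n. \<Sum>i\<in>{1..blk_end k N}. rmult (Y c a) (X a c) i i) mod int k"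
    by (rule arg_cong[where f = "\<lambda>x. x mod int k"], rule sum.swap)
  also have "\<dots> = (\<Sum>a=1..m. \<Sum>c=1..n. \<Sum>i\<in>{1..blk_end k N}. rmult (X a c) (Y c a) i i) mod int k"
    unfolding cong_def[symmetric]
    using R S by (intro cong_sum cong_sym[OF corner_trace_rmult_commute[OF assms(1) N]]) auto
  also have "\<dots> = frakT k m (mmult n X Y)"
    using R S by (intro frakT_mmult_eq[OF assms(1) N, symmetric]) auto
  finally show ?thesis ..
qed

end
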